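(* Let $T>0$ and let $\theta$ be a strictly positive adapted process on $[0,T]$ that is a.s. Riemann integrable with $\inf_{0\le t\le T}\theta(t)>0$ a.s. Define $\tau^n_0=0$, $\tau^n_{k+1}=\big(\tau^n_k+\frac{1}{n\theta(\tau^n_k)}\big)\wedge T$, and $N_n=\max\{k:\tau^n_k<T\}$. Then $$\lim_{n\to\infty}\frac{N_n}{n}=\int_0^T\theta(t)\,dt\quad\text{a.s.}$$ If, in addition, $\mathbb{E}\big[\sup_{0\le t\le T}\theta(t)\big]<\infty$, then $$\lim_{n\to\infty}\mathbb{E}\frac{N_n}{n}=\int_0^T\mathbb{E}\theta(t)\,dt.$$ *)

theory Defs
  imports "HOL-Probability.Probability"
begin

text \<open>Riemann integrability on a compact interval: Riemann sums over tagged divisions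
  converge as the mesh (a constant gauge) tends to zero.\<close>
definition riemann_integrable_on :: "(real \<Rightarrow> real) \<Rightarrow> real \<Rightarrow> real \<Rightarrow> bool" where
  "riemann_integrable_on f a b \<longleftrightarrow>
     (\<exists>I. \<forall>e>0. \<exists>\<delta>>0. \<forall>D. D tagged_division_of {a..b} \<and> (\<lambda>x. ball x \<delta>) fine D \<longrightarrow>
        \<bar>(\<Sum>(x,K)\<in>D. Henstock_Kurzweil_Integration.content K * f x) - I\<bar> < e)"

definition adapted_on :: "real \<Rightarrow> (real \<Rightarrow> 'a measure) \<Rightarrow> (real \<Rightarrow> 'a \<Rightarrow> real) \<Rightarrow> bool" where
  "adapted_on T F X \<longleftrightarrow> (\<forall>t\<in>{0..T}. (\<lambda>\<omega>. X t \<omega>) \<in> borel_measurable (F t))"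

fun tau :: "real \<Rightarrow> (real \<Rightarrow> 'a \<Rightarrow> real) \<Rightarrow> nat \<Rightarrow> 'a \<Rightarrow> nat \<Rightarrow> real" where
  "tau T \<theta> n \<omega> 0 = 0"
| "tau T \<theta> n \<omega> (Suc k) =
     min (tau T \<theta> n \<omega> k + 1 / (real n * \<theta> (tau T \<theta> n \<omega> k) \<omega>)) T"

definition Ncount :: "real \<Rightarrow> (real \<Rightarrow> 'a \<Rightarrow> real) \<Rightarrow> nat \<Rightarrow> 'a \<Rightarrow> nat" where
  "Ncount T \<theta> n \<omega> = Max {k. tau T \<theta> n \<omega> k < T}"

end

theory Submission
  imports Defs
begin

text \<open>Along a fixed path the grid points \<open>\<tau>\<^sub>0, \<dots>, \<tau>\<^sub>N\<^sub>+\<^sub>1\<close> (with \<open>N = N\<^sub>n\<close>) partition \<open>[0, T]\<close>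
  into cells of length at most \<open>1 / (n inf \<theta>)\<close>. Tagging every cell at its left end point, each
  cell but the last contributes exactly \<open>1 / n\<close> to the Riemann sum of \<open>\<theta>\<close>, and the last one at
  most \<open>1 / n\<close>. So \<open>N\<^sub>n / n\<close> is within \<open>1 / n\<close> of Riemann sums of vanishing mesh, which
  converge to the integral. For the expectations, every cell ending before \<open>T\<close> has length at
  least \<open>1 / (n sup \<theta>)\<close>, so \<open>N\<^sub>n / n \<le> T sup \<theta>\<close>; dominated convergence and Fubini's
  theorem finish the proof.\<close>

section \<open>Riemann sums\<close>

text \<open>\<open>content\<close> alone would refer to the content of a polynomial.\<close>
abbreviation riemann_sum :: "(real \<Rightarrow> real) \<Rightarrow> (real \<times> real set) set \<Rightarrow> real" where
  "riemann_sum f D \<equiv> \<Sum>(x,K)\<in>D. Henstock_Kurzweil_Integration.content K * f x"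

lemma riemann_sums_tendsto_integral:
  assumes "riemann_integrable_on f a b" "e > 0"
  obtains \<delta> where "\<delta> > 0"
    and "\<And>D. D tagged_division_of {a..b} \<Longrightarrow> (\<lambda>x. ball x \<delta>) fine D \<Longrightarrow>
           \<bar>riemann_sum f D - integral {a..b} f\<bar> < e"
proof -
  obtain I where I: "\<forall>e>0. \<exists>\<delta>>0. \<forall>D. D tagged_division_of {a..b} \<and> (\<lambda>x. ball x \<delta>) fine D \<longrightarrow>
      \<bar>riemann_sum f D - I\<bar> < e"
    using assms(1) unfolding riemann_integrable_on_def by blast
  have "(f has_integral I) (cbox a b)"
    unfolding has_integral
  proof (intro allI impI)
    fix e :: real assume "e > 0"
    with I obtain \<delta> where "\<delta> > 0" "\<forall>D. D tagged_division_of {a..b} \<and> (\<lambda>x. ball x \<delta>) fine D \<longrightarrow>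
        \<bar>riemann_sum f D - I\<bar> < e"
      by blast
    then show "\<exists>\<gamma>. gauge \<gamma> \<and> (\<forall>D. D tagged_division_of cbox a b \<and> \<gamma> fine D \<longrightarrow>
        norm ((\<Sum>(x, K)\<in>D. Henstock_Kurzweil_Integration.content K *\<^sub>R f x) - I) < e)"
      by (intro exI[of _ "\<lambda>x. ball x \<delta>"]) auto
  qed
  then have "integral {a..b} f = I"
    by (simp add: integral_unique)
  moreover obtain \<delta> where "\<delta> > 0" "\<forall>D. D tagged_division_of {a..b} \<and> (\<lambda>x. ball x \<delta>) fine D \<longrightarrow>
      \<bar>riemann_sum f D - I\<bar> < e"
    using I assms(2) by blast
  ultimately show ?thesis
    using that by blast
qed

lemma tagged_division_of_points:
  fixes p x :: "nat \<Rightarrow> real"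
  assumes "0 < m"
    and incr: "\<And>j. j < m \<Longrightarrow> p j < p (Suc j)"
    and tags: "\<And>j. j < m \<Longrightarrow> x j \<in> {p j..p (Suc j)}"
  shows "(\<lambda>j. (x j, {p j..p (Suc j)})) ` {..<m} tagged_division_of {p 0..p m}"
proof -
  have mono: "\<And>j. j \<in> {..<m} \<Longrightarrow> p j \<le> p (Suc j)"
    using incr by (simp add: less_imp_le)
  have "(\<lambda>j. (x j, {p j..p (Suc j)})) ` {..<Suc k} tagged_division_of {p 0..p (Suc k)}"
    if "k < m" for k
    using that
  proof (induction k)
    case 0
    then show ?case
      using tags[of 0] by (simp add: lessThan_Suc tagged_division_of_self_real)
  next
    case (Suc k)
    have "p 0 \<le> p (Suc k)"
      using Suc.prems by (intro lift_Suc_mono_le_ivl[of "{..<m}" p, OF mono]) auto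
    then have cover: "{p 0..p (Suc k)} \<union> {p (Suc k)..p (Suc (Suc k))} = {p 0..p (Suc (Suc k))}"
      using incr[of "Suc k"] Suc.prems by auto
    have last: "{(x (Suc k), {p (Suc k)..p (Suc (Suc k))})} tagged_division_of {p (Suc k)..p (Suc (Suc k))}"
      using tags[of "Suc k"] Suc.prems by (simp add: tagged_division_of_self_real)
    have "interior {p 0..p (Suc k)} \<inter> interior {p (Suc k)..p (Suc (Suc k))} = {}"
      by auto
    from tagged_division_Un[OF Suc.IH last this] Suc.prems
    have "(\<lambda>j. (x j, {p j..p (Suc j)})) ` {..<Suc k} \<union> {(x (Suc k), {p (Suc k)..p (Suc (Suc k))})}
        tagged_division_of {p 0..p (Suc (Suc k))}"
      by (simp only: cover Suc_lessD)
    then show ?case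
      unfolding lessThan_Suc[of "Suc k"] image_insert by simp
  qed
  from this[of "m - 1"] show ?thesis
    using \<open>0 < m\<close> by simp
qed

lemma riemann_sum_points:
  fixes p x :: "nat \<Rightarrow> real"
  assumes incr: "\<And>j. j < m \<Longrightarrow> p j < p (Suc j)"
  shows "riemann_sum f ((\<lambda>j. (x j, {p j..p (Suc j)})) ` {..<m}) = (\<Sum>j<m. (p (Suc j) - p j) * f (x j))"
proof -
  have incr': "\<And>j. j \<in> {..<m} \<Longrightarrow> p j < p (Suc j)"
    using incr by simp
  have "p i < p j" if "i < j" "j < m" for i j
    using that by (intro lift_Suc_mono_less_ivl[of "{..<m}" p, OF incr']) auto
  then have "inj_on p {..<m}"
    by (intro inj_onI) (metis lessThan_iff linorder_neqE_nat less_irrefl)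
  have "inj_on (\<lambda>j. (x j, {p j..p (Suc j)})) {..<m}"
  proof (rule inj_onI)
    fix i j assume ij: "i \<in> {..<m}" "j \<in> {..<m}"
      and "(x i, {p i..p (Suc i)}) = (x j, {p j..p (Suc j)})"
    then have "p i = p j"
      using incr[of i] by (simp add: Icc_eq_Icc)
    with \<open>inj_on p {..<m}\<close> ij show "i = j"
      by (auto dest: inj_onD)
  qed
  then have "riemann_sum f ((\<lambda>j. (x j, {p j..p (Suc j)})) ` {..<m})
      = (\<Sum>j<m. Henstock_Kurzweil_Integration.content {p j..p (Suc j)} * f (x j))"
    by (simp add: sum.reindex)
  also have "\<dots> = (\<Sum>j<m. (p (Suc j) - p j) * f (x j))"
    using incr by (intro sum.cong refl) (simp add: less_imp_le)
  finally show ?thesis .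
qed

lemma ex_cell_points:
  fixes p :: "nat \<Rightarrow> real"
  assumes "t \<in> {p 0..p m}" "0 < m"
  obtains j where "j < m" "t \<in> {p j..p (Suc j)}"
proof -
  define j where "j = Max {i. i < m \<and> p i \<le> t}"
  have fin: "finite {i. i < m \<and> p i \<le> t}" and "0 \<in> {i. i < m \<and> p i \<le> t}"
    using assms by auto
  then have "j \<in> {i. i < m \<and> p i \<le> t}"
    unfolding j_def by (intro Max_in) auto
  then have j: "j < m" "p j \<le> t"
    by auto
  have "t \<le> p (Suc j)"
  proof (cases "Suc j < m")
    case True
    then have "Suc j \<notin> {i. i < m \<and> p i \<le> t}"
      using Max_ge[OF fin] unfolding j_def[symmetric] by fastforce
    with True show ?thesis by simp
  next
    case False
    with j have "Suc j = m"
      by simp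
    with assms(1) show ?thesis
      by simp
  qed
  with j that show ?thesis by simp
qed

lemma fine_points:
  fixes p x :: "nat \<Rightarrow> real"
  assumes "\<And>j. j < m \<Longrightarrow> p (Suc j) - p j < \<delta>"
    and "\<And>j. j < m \<Longrightarrow> x j \<in> {p j..p (Suc j)}"
  shows "(\<lambda>y. ball y \<delta>) fine ((\<lambda>j. (x j, {p j..p (Suc j)})) ` {..<m})"
  unfolding fine_def using assms by (force simp: dist_real_def)

lemma riemann_integrable_on_bounded:
  assumes "riemann_integrable_on f a b"
  obtains B where "\<And>t. t \<in> {a..b} \<Longrightarrow> \<bar>f t\<bar> \<le> B"
proof (cases "a < b")
  case False
  then have "t = a" if "t \<in> {a..b}" for t
    using that by auto
  then show ?thesis
    using that[of "\<bar>f a\<bar>"] by blast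
next
  case True
  obtain \<delta> where "\<delta> > 0" and \<delta>: "\<And>D. D tagged_division_of {a..b} \<Longrightarrow> (\<lambda>x. ball x \<delta>) fine D \<Longrightarrow>
      \<bar>riemann_sum f D - integral {a..b} f\<bar> < 1"
    using riemann_sums_tendsto_integral[OF assms zero_less_one] by blast
  obtain m :: nat where m: "(b - a) / \<delta> < real m"
    using reals_Archimedean2 by blast
  define h where "h = (b - a) / real m"
  define p where "p j = a + real j * h" for j
  have "0 < m"
    using m True \<open>\<delta> > 0\<close> by (auto intro: gr0I simp: field_simps)
  then have "0 < h" "h < \<delta>" "p 0 = a" "p m = b"
    using m True \<open>\<delta> > 0\<close> by (auto simp: h_def p_def field_simps)
  have step: "p (Suc j) - p j = h" for j
    by (simp add: p_def algebra_simps)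
  then have incr: "p j < p (Suc j)" for j
    using \<open>0 < h\<close> by (smt (verit))
  have sums: "\<bar>(\<Sum>j<m. h * f (x j)) - integral {a..b} f\<bar> < 1"
    if "\<And>j. j < m \<Longrightarrow> x j \<in> {p j..p (Suc j)}" for x
  proof -
    define D where "D = (\<lambda>j. (x j, {p j..p (Suc j)})) ` {..<m}"
    have "D tagged_division_of {a..b}"
      using tagged_division_of_points[of m p x] that incr \<open>0 < m\<close> \<open>p 0 = a\<close> \<open>p m = b\<close>
      by (simp add: D_def)
    moreover have "(\<lambda>y. ball y \<delta>) fine D"
      using fine_points[of m p \<delta> x] that step \<open>h < \<delta>\<close> by (simp add: D_def)
    ultimately have "\<bar>riemann_sum f D - integral {a..b} f\<bar> < 1"
      by (rule \<delta>)
    then show ?thesis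
      using riemann_sum_points[of m p f x] step incr by (simp add: D_def)
  qed
  have "\<bar>f t\<bar> \<le> (\<Sum>j<m. \<bar>f (p j)\<bar>) + 2 / h" if "t \<in> {a..b}" for t
  proof -
    have "t \<in> {p 0..p m}"
      using that \<open>p 0 = a\<close> \<open>p m = b\<close> by simp
    then obtain j where j: "j < m" "t \<in> {p j..p (Suc j)}"
      using \<open>0 < m\<close> by (rule ex_cell_points)
    have "p i \<in> {p i..p (Suc i)}" for i
      using incr[of i] by simp
    then have "\<bar>(\<Sum>i<m. h * f ((p(j := t)) i)) - (\<Sum>i<m. h * f (p i))\<bar> < 2"
      using sums[of p] sums[of "p(j := t)"] j by (smt (verit) fun_upd_apply)
    also have "(\<Sum>i<m. h * f ((p(j := t)) i)) - (\<Sum>i<m. h * f (p i))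
        = (\<Sum>i<m. if i = j then h * (f t - f (p j)) else 0)"
      unfolding sum_subtractf[symmetric] by (intro sum.cong) (auto simp: algebra_simps)
    also have "\<dots> = h * (f t - f (p j))"
      using j(1) by simp
    finally have "h * \<bar>f t - f (p j)\<bar> < 2"
      using \<open>0 < h\<close> by (simp only: abs_mult abs_of_pos)
    then have "\<bar>f t - f (p j)\<bar> < 2 / h"
      using \<open>0 < h\<close> by (simp add: pos_less_divide_eq mult.commute)
    moreover have "\<bar>f (p j)\<bar> \<le> (\<Sum>i<m. \<bar>f (p i)\<bar>)"
      using j(1) by (intro member_le_sum) auto
    ultimately show ?thesis
      by linarith
  qed
  then show ?thesis
    using that by blast
qed

section \<open>Lebesgue integrals over an interval\<close>

lemma finite_measure_restrict_lborel_Icc: "finite_measure (restrict_space lborel {a..b::real})"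
  using emeasure_lborel_cbox_finite[of a b] by (intro finite_measureI) (simp add: emeasure_restrict_space)

lemma riemann_integrable_on_integrable:
  assumes "f \<in> borel_measurable (restrict_space lborel {a..b})" "riemann_integrable_on f a b"
  shows "integrable (restrict_space lborel {a..b}) f"
proof -
  obtain B where "\<And>t. t \<in> {a..b} \<Longrightarrow> \<bar>f t\<bar> \<le> B"
    using riemann_integrable_on_bounded[OF assms(2)] by blast
  then show ?thesis
    using assms(1) finite_measure_restrict_lborel_Icc
    by (intro finite_measure.integrable_const_bound[where B=B]) (auto simp: space_restrict_space)
qed

lemma lebesgue_integral_restrict_lborel_eq_integral:
  fixes f :: "real \<Rightarrow> real"
  assumes "integrable (restrict_space lborel S) f" "S \<in> sets lborel"
  shows "(\<integral>x. f x \<partial>restrict_space lborel S) = integral S f"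
proof -
  have "set_integrable lborel S f"
    using assms unfolding set_integrable_def by (simp add: integrable_restrict_space)
  moreover have "(\<integral>x. f x \<partial>restrict_space lborel S) = (LINT x:S|lborel. f x)"
    using assms(2) unfolding set_lebesgue_integral_def by (simp add: integral_restrict_space)
  ultimately show ?thesis
    by (simp add: set_borel_integral_eq_integral)
qed

lemma Fubini_integral_interval:
  fixes f :: "real \<Rightarrow> 'a \<Rightarrow> real"
  assumes "sigma_finite_measure M"
    and f: "(\<lambda>(t, \<omega>). f t \<omega>) \<in> borel_measurable (restrict_space lborel {a..b} \<Otimes>\<^sub>M M)"
    and integrable_norm: "integrable M (\<lambda>\<omega>. \<integral>t. \<bar>f t \<omega>\<bar> \<partial>restrict_space lborel {a..b})"
    and integrable_section: "AE \<omega> in M. integrable (restrict_space lborel {a..b}) (\<lambda>t. f t \<omega>)"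
  shows "(\<integral>\<omega>. (\<integral>t. f t \<omega> \<partial>restrict_space lborel {a..b}) \<partial>M) = integral {a..b} (\<lambda>t. \<integral>\<omega>. f t \<omega> \<partial>M)"
proof -
  let ?R = "restrict_space lborel {a..b}"
  interpret R: finite_measure ?R
    by (rule finite_measure_restrict_lborel_Icc)
  interpret M: sigma_finite_measure M
    by (rule assms(1))
  interpret pair_sigma_finite M ?R ..
  have "(\<lambda>(\<omega>, t). f t \<omega>) \<in> borel_measurable (M \<Otimes>\<^sub>M ?R)"
    using f by (subst measurable_pair_swap_iff) simp
  then have "integrable (M \<Otimes>\<^sub>M ?R) (\<lambda>(\<omega>, t). f t \<omega>)"
    using integrable_norm integrable_section by (intro Fubini_integrable) auto
  then have "(\<integral>\<omega>. (\<integral>t. f t \<omega> \<partial>?R) \<partial>M) = (\<integral>t. (\<integral>\<omega>. f t \<omega> \<partial>M) \<partial>?R)"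
    and "integrable ?R (\<lambda>t. \<integral>\<omega>. f t \<omega> \<partial>M)"
    using Fubini_integral[of "\<lambda>\<omega> t. f t \<omega>"] integrable_snd[of "\<lambda>\<omega> t. f t \<omega>"] by auto
  then show ?thesis
    by (simp add: lebesgue_integral_restrict_lborel_eq_integral)
qed

section \<open>The grid along one path\<close>

text \<open>A countable supremum, hence measurable, unlike the supremum of the rate over \<open>[0, T]\<close>.\<close>
definition rate_grid_sup :: "real \<Rightarrow> (real \<Rightarrow> 'a \<Rightarrow> real) \<Rightarrow> 'a \<Rightarrow> ennreal" where
  "rate_grid_sup T \<theta> \<omega> = (SUP (n, k)\<in>UNIV. ennreal (\<theta> (tau T \<theta> n \<omega> k) \<omega>))"

locale tau_path =
  fixes T :: real and \<theta> :: "real \<Rightarrow> 'a \<Rightarrow> real" and \<omega> :: 'a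
  assumes T_pos: "0 < T"
    and rate_pos: "\<And>t. t \<in> {0..T} \<Longrightarrow> 0 < \<theta> t \<omega>"
begin

abbreviation \<tau> :: "nat \<Rightarrow> nat \<Rightarrow> real" where
  "\<tau> n k \<equiv> tau T \<theta> n \<omega> k"

abbreviation N :: "nat \<Rightarrow> nat" where
  "N n \<equiv> Ncount T \<theta> n \<omega>"

abbreviation grid_division :: "nat \<Rightarrow> (real \<times> real set) set" where
  "grid_division n \<equiv> (\<lambda>j. (\<tau> n j, {\<tau> n j..\<tau> n (Suc j)})) ` {..<Suc (N n)}"

declare tau.simps(2) [simp del]

lemma tau_in_interval: "\<tau> n k \<in> {0..T}"
proof (induction k)
  case 0
  then show ?case
    using T_pos by simp
next
  case (Suc k)
  then have "0 \<le> 1 / (real n * \<theta> (\<tau> n k) \<omega>)"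
    using rate_pos[of "\<tau> n k"] by simp
  with Suc show ?case
    using T_pos by (auto simp: tau.simps(2))
qed

lemma rate_tau_pos: "0 < \<theta> (\<tau> n k) \<omega>"
  using rate_pos tau_in_interval by blast

lemma tau_le_Suc: "\<tau> n k \<le> \<tau> n (Suc k)"
  using tau_in_interval[of n k] rate_tau_pos[of n k] by (simp add: tau.simps(2))

lemma incseq_tau: "incseq (\<tau> n)"
  using tau_le_Suc by (rule incseq_SucI)

lemma tau_Suc_le: "\<tau> n (Suc k) \<le> \<tau> n k + 1 / (real n * \<theta> (\<tau> n k) \<omega>)"
  by (simp add: tau.simps(2))

lemma tau_Suc_eq:
  assumes "\<tau> n (Suc k) < T"
  shows "\<tau> n (Suc k) = \<tau> n k + 1 / (real n * \<theta> (\<tau> n k) \<omega>)"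
  using assms by (simp add: tau.simps(2) min_def split: if_splits)

lemma tau_less_Suc:
  assumes "0 < n" "\<tau> n k < T"
  shows "\<tau> n k < \<tau> n (Suc k)"
  using assms rate_tau_pos[of n k] by (simp add: tau.simps(2))

context
  fixes n :: nat and B :: real
  assumes n_pos: "0 < n" and B_pos: "0 < B"
    and rate_tau_le: "\<And>k. \<theta> (\<tau> n k) \<omega> \<le> B"
begin

lemma tau_lower_bound:
  assumes "\<tau> n k < T"
  shows "real k / (real n * B) \<le> \<tau> n k"
  using assms
proof (induction k)
  case 0
  then show ?case by simp
next
  case (Suc k)
  then have "\<tau> n k < T"
    using tau_le_Suc[of n k] by linarith
  have "1 / (real n * B) \<le> 1 / (real n * \<theta> (\<tau> n k) \<omega>)"
    using n_pos rate_tau_pos[of n k] rate_tau_le[of k] by (intro divide_left_mono mult_left_mono) auto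
  with Suc.IH[OF \<open>\<tau> n k < T\<close>] have "real (Suc k) / (real n * B) \<le> \<tau> n k + 1 / (real n * \<theta> (\<tau> n k) \<omega>)"
    by (simp add: add_divide_distrib)
  then show ?case
    using tau_Suc_eq[OF Suc.prems] by simp
qed

lemma finite_tau_less: "finite {k. \<tau> n k < T}"
proof (rule finite_subset)
  show "{k. \<tau> n k < T} \<subseteq> {..nat \<lceil>T * real n * B\<rceil>}"
  proof
    fix k assume "k \<in> {k. \<tau> n k < T}"
    then have "real k / (real n * B) < T"
      using tau_lower_bound[of k] by simp
    then have "real k < T * real n * B"
      using n_pos B_pos by (simp add: field_simps)
    then show "k \<in> {..nat \<lceil>T * real n * B\<rceil>}"
      by simp linarith
  qed
qed simp

lemma tau_less_iff_le_Ncount: "\<tau> n k < T \<longleftrightarrow> k \<le> N n"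
proof
  assume "\<tau> n k < T"
  then show "k \<le> N n"
    unfolding Ncount_def using finite_tau_less by (intro Max_ge) auto
next
  assume "k \<le> N n"
  moreover have "\<tau> n (N n) < T"
  proof -
    have "{k. \<tau> n k < T} \<noteq> {}"
      using T_pos by (auto intro!: exI[of _ 0])
    then have "N n \<in> {k. \<tau> n k < T}"
      unfolding Ncount_def using finite_tau_less by (intro Max_in)
    then show ?thesis
      by simp
  qed
  ultimately show "\<tau> n k < T"
    using incseq_tau[of n] by (meson incseqD le_less_trans)
qed

lemma tau_Suc_Ncount: "\<tau> n (Suc (N n)) = T"
  using tau_less_iff_le_Ncount[of "Suc (N n)"] tau_in_interval[of n "Suc (N n)"] by simp

lemma Ncount_div_le: "real (N n) / real n \<le> T * B"
proof -
  have "real (N n) / (real n * B) < T"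
    using tau_lower_bound[of "N n"] tau_less_iff_le_Ncount[of "N n"] by simp
  then show ?thesis
    using n_pos B_pos by (simp add: field_simps)
qed

lemma tau_less_Suc_if_le_Ncount: "j \<le> N n \<Longrightarrow> \<tau> n j < \<tau> n (Suc j)"
  using n_pos tau_less_iff_le_Ncount by (intro tau_less_Suc) auto

lemma tagged_division_grid: "grid_division n tagged_division_of {0..T}"
  using tagged_division_of_points[of "Suc (N n)" "\<tau> n" "\<tau> n"] tau_Suc_Ncount tau_less_Suc_if_le_Ncount
  by (simp add: less_imp_le)

text \<open>All cells but the last contribute exactly \<open>1 / n\<close> to the Riemann sum of the rate
  over the grid; the last one is cut off at \<open>T\<close>.\<close>
lemma riemann_sum_grid_bounds:
  shows "real (N n) / real n < riemann_sum (\<lambda>t. \<theta> t \<omega>) (grid_division n)"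
    and "riemann_sum (\<lambda>t. \<theta> t \<omega>) (grid_division n) \<le> real (N n) / real n + 1 / real n"
proof -
  have full: "(\<tau> n (Suc j) - \<tau> n j) * \<theta> (\<tau> n j) \<omega> = 1 / real n" if "j < N n" for j
  proof -
    have "\<tau> n (Suc j) < T"
      using that tau_less_iff_le_Ncount[of "Suc j"] by simp
    then show ?thesis
      using tau_Suc_eq[of n j] rate_tau_pos[of n j] n_pos by simp
  qed
  define r where "r = (T - \<tau> n (N n)) * \<theta> (\<tau> n (N n)) \<omega>"
  have "riemann_sum (\<lambda>t. \<theta> t \<omega>) (grid_division n)
      = (\<Sum>j<Suc (N n). (\<tau> n (Suc j) - \<tau> n j) * \<theta> (\<tau> n j) \<omega>)"
    using tau_less_Suc_if_le_Ncount by (intro riemann_sum_points) simp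
  also have "\<dots> = real (N n) / real n + r"
    unfolding r_def using full tau_Suc_Ncount by simp
  finally have sum_eq: "riemann_sum (\<lambda>t. \<theta> t \<omega>) (grid_division n) = real (N n) / real n + r" .
  have "0 < r"
    unfolding r_def using tau_less_iff_le_Ncount[of "N n"] rate_tau_pos[of n "N n"] by simp
  moreover have "r \<le> 1 / real n"
  proof -
    have "T - \<tau> n (N n) \<le> 1 / (real n * \<theta> (\<tau> n (N n)) \<omega>)"
      using tau_Suc_le[of n "N n"] tau_Suc_Ncount by simp
    then have "r \<le> 1 / (real n * \<theta> (\<tau> n (N n)) \<omega>) * \<theta> (\<tau> n (N n)) \<omega>"
      unfolding r_def using rate_tau_pos[of n "N n"] by (intro mult_right_mono) auto
    then show ?thesis
      using rate_tau_pos[of n "N n"] by simp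
  qed
  ultimately show "real (N n) / real n < riemann_sum (\<lambda>t. \<theta> t \<omega>) (grid_division n)"
    and "riemann_sum (\<lambda>t. \<theta> t \<omega>) (grid_division n) \<le> real (N n) / real n + 1 / real n"
    unfolding sum_eq by simp_all
qed

end

lemma fine_grid_division:
  assumes "0 < n" "0 < c" "\<And>t. t \<in> {0..T} \<Longrightarrow> c \<le> \<theta> t \<omega>" "1 / (real n * c) < \<delta>"
  shows "(\<lambda>x. ball x \<delta>) fine grid_division n"
proof (rule fine_points)
  fix j
  have "1 / (real n * \<theta> (\<tau> n j) \<omega>) \<le> 1 / (real n * c)"
    using assms(1-3) tau_in_interval rate_tau_pos[of n j]
    by (intro divide_left_mono mult_left_mono) (auto intro!: mult_pos_pos)
  then show "\<tau> n (Suc j) - \<tau> n j < \<delta>"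
    using tau_Suc_le[of n j] assms(4) by linarith
  show "\<tau> n j \<in> {\<tau> n j..\<tau> n (Suc j)}"
    using tau_le_Suc by simp
qed

lemma rate_bounds:
  assumes "riemann_integrable_on (\<lambda>t. \<theta> t \<omega>) 0 T" and "0 < (INF t\<in>{0..T}. \<theta> t \<omega>)"
  obtains c B where "0 < c" "0 < B" "\<And>t. t \<in> {0..T} \<Longrightarrow> c \<le> \<theta> t \<omega> \<and> \<theta> t \<omega> \<le> B"
proof -
  obtain B where "\<And>t. t \<in> {0..T} \<Longrightarrow> \<bar>\<theta> t \<omega>\<bar> \<le> B"
    using riemann_integrable_on_bounded[OF assms(1)] by blast
  moreover have "(INF t\<in>{0..T}. \<theta> t \<omega>) \<le> \<theta> t \<omega>" if "t \<in> {0..T}" for t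
    using that rate_pos by (intro cINF_lower bdd_belowI[of _ 0]) (auto intro: less_imp_le)
  ultimately show ?thesis
    using that[of "INF t\<in>{0..T}. \<theta> t \<omega>" "max B 1"] assms(2)
    by (meson abs_ge_self max.coboundedI1 order_trans zero_less_one less_max_iff_disj)
qed

lemma Ncount_div_tendsto_integral:
  assumes "riemann_integrable_on (\<lambda>t. \<theta> t \<omega>) 0 T" and "0 < (INF t\<in>{0..T}. \<theta> t \<omega>)"
  shows "(\<lambda>n. real (N n) / real n) \<longlonglongrightarrow> integral {0..T} (\<lambda>t. \<theta> t \<omega>)"
proof -
  obtain c B where "0 < c" "0 < B" and bounds: "\<And>t. t \<in> {0..T} \<Longrightarrow> c \<le> \<theta> t \<omega> \<and> \<theta> t \<omega> \<le> B"
    using rate_bounds[OF assms] by blast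
  then have rate_tau_le: "\<theta> (\<tau> n k) \<omega> \<le> B" for n k
    using tau_in_interval by blast
  show ?thesis
  proof (rule tendsto_iff[THEN iffD2], intro allI impI)
    fix e :: real assume "0 < e"
    then have "0 < e / 2"
      by simp
    then obtain \<delta> where "0 < \<delta>" and \<delta>: "\<And>D. D tagged_division_of {0..T} \<Longrightarrow>
        (\<lambda>x. ball x \<delta>) fine D \<Longrightarrow> \<bar>riemann_sum (\<lambda>t. \<theta> t \<omega>) D - integral {0..T} (\<lambda>t. \<theta> t \<omega>)\<bar> < e / 2"
      using riemann_sums_tendsto_integral[OF assms(1)] by blast
    have "\<forall>\<^sub>F n in sequentially. 1 / real n < min (c * \<delta>) (e / 2)"
      using \<open>0 < c\<close> \<open>0 < \<delta>\<close> \<open>0 < e\<close> by (intro order_tendstoD(2)[OF lim_1_over_n]) simp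
    then show "\<forall>\<^sub>F n in sequentially. dist (real (N n) / real n) (integral {0..T} (\<lambda>t. \<theta> t \<omega>)) < e"
      using eventually_gt_at_top[of 0]
    proof eventually_elim
      case (elim n)
      then have "1 / (real n * c) < \<delta>"
        using \<open>0 < c\<close> by (simp add: field_simps)
      then have "(\<lambda>x. ball x \<delta>) fine grid_division n"
        using fine_grid_division[OF elim(2) \<open>0 < c\<close>] bounds by blast
      with \<delta> tagged_division_grid[OF elim(2) \<open>0 < B\<close> rate_tau_le]
      have "\<bar>riemann_sum (\<lambda>t. \<theta> t \<omega>) (grid_division n) - integral {0..T} (\<lambda>t. \<theta> t \<omega>)\<bar> < e / 2"
        by blast
      with riemann_sum_grid_bounds[OF elim(2) \<open>0 < B\<close> rate_tau_le] elim(1) show ?case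
        unfolding dist_real_def by linarith
    qed
  qed
qed

lemma rate_grid_sup_le: "rate_grid_sup T \<theta> \<omega> \<le> (SUP t\<in>{0..T}. ennreal (\<theta> t \<omega>))"
  unfolding rate_grid_sup_def using tau_in_interval by (auto intro!: SUP_least SUP_upper)

lemma Ncount_div_le_rate_grid_sup:
  assumes "rate_grid_sup T \<theta> \<omega> \<noteq> \<infinity>"
  shows "\<bar>real (N n) / real n\<bar> \<le> T * (enn2real (rate_grid_sup T \<theta> \<omega>) + 1)"
proof (cases "n = 0")
  case False
  have "\<theta> (\<tau> n k) \<omega> \<le> enn2real (rate_grid_sup T \<theta> \<omega>) + 1" for k
  proof -
    have "ennreal (\<theta> (\<tau> n k) \<omega>) \<le> rate_grid_sup T \<theta> \<omega>"
      unfolding rate_grid_sup_def by (rule SUP_upper2[of "(n, k)"]) auto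
    also have "\<dots> = ennreal (enn2real (rate_grid_sup T \<theta> \<omega>))"
      using assms by (simp add: less_top)
    finally show ?thesis
      by (simp add: ennreal_le_iff)
  qed
  then show ?thesis
    using Ncount_div_le[of n] False by (simp add: add_nonneg_pos)
qed (use T_pos in simp)

end

section \<open>Measurability and expectations\<close>

context
  fixes M :: "'a measure" and \<theta> :: "real \<Rightarrow> 'a \<Rightarrow> real" and T :: real
  assumes T_pos: "0 < T"
    and rate_measurable: "(\<lambda>(t, \<omega>). \<theta> t \<omega>) \<in> borel_measurable (restrict_space lborel {0..T} \<Otimes>\<^sub>M M)"
    and rate_pos: "\<And>t \<omega>. t \<in> {0..T} \<Longrightarrow> \<omega> \<in> space M \<Longrightarrow> 0 < \<theta> t \<omega>"
begin

lemma tau_path_space: "\<omega> \<in> space M \<Longrightarrow> tau_path T \<theta> \<omega>"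
  using T_pos rate_pos by unfold_locales auto

lemma measurable_rate_at:
  assumes "(\<lambda>\<omega>. s \<omega>) \<in> borel_measurable M" "\<And>\<omega>. \<omega> \<in> space M \<Longrightarrow> s \<omega> \<in> {0..T}"
  shows "(\<lambda>\<omega>. \<theta> (s \<omega>) \<omega>) \<in> borel_measurable M"
proof -
  have "(\<lambda>\<omega>. (s \<omega>, \<omega>)) \<in> M \<rightarrow>\<^sub>M restrict_space lborel {0..T} \<Otimes>\<^sub>M M"
    using assms by (intro measurable_Pair measurable_restrict_space2) auto
  from measurable_compose[OF this rate_measurable] show ?thesis
    by simp
qed

lemma measurable_tau: "(\<lambda>\<omega>. tau T \<theta> n \<omega> k) \<in> borel_measurable M"
proof (induction k)
  case (Suc k)
  have [measurable]: "(\<lambda>\<omega>. \<theta> (tau T \<theta> n \<omega> k) \<omega>) \<in> borel_measurable M"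
    using Suc tau_path.tau_in_interval[OF tau_path_space]
    by (intro measurable_rate_at) auto
  show ?case
    using Suc by simp measurable
qed simp

lemma measurable_rate_tau: "(\<lambda>\<omega>. \<theta> (tau T \<theta> n \<omega> k) \<omega>) \<in> borel_measurable M"
  using measurable_tau tau_path.tau_in_interval[OF tau_path_space]
  by (intro measurable_rate_at) auto

lemma measurable_Ncount: "(\<lambda>\<omega>. real (Ncount T \<theta> n \<omega>)) \<in> borel_measurable M"
proof -
  have [measurable]: "(\<lambda>\<omega>. tau T \<theta> n \<omega> k) \<in> borel_measurable M" for k
    by (rule measurable_tau)
  have "(\<lambda>\<omega>. Ncount T \<theta> n \<omega>) \<in> M \<rightarrow>\<^sub>M count_space UNIV"
    unfolding Ncount_def by measurable
  then show ?thesis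
    by (rule measurable_compose) simp
qed

lemma borel_measurable_rate_grid_sup: "rate_grid_sup T \<theta> \<in> borel_measurable M"
  unfolding rate_grid_sup_def using measurable_rate_tau by measurable

lemma Ncount_div_dominated:
  assumes "finite_measure M" and "(\<integral>\<^sup>+\<omega>. (SUP t\<in>{0..T}. ennreal (\<theta> t \<omega>)) \<partial>M) < \<infinity>"
  shows "integrable M (\<lambda>\<omega>. T * (enn2real (rate_grid_sup T \<theta> \<omega>) + 1))"
    and "AE \<omega> in M. \<bar>real (Ncount T \<theta> n \<omega>) / real n\<bar> \<le> T * (enn2real (rate_grid_sup T \<theta> \<omega>) + 1)"
proof -
  interpret finite_measure M
    by (rule assms(1))
  have finite_integral: "(\<integral>\<^sup>+\<omega>. rate_grid_sup T \<theta> \<omega> \<partial>M) < \<infinity>"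
    using assms(2) tau_path.rate_grid_sup_le[OF tau_path_space]
    by (meson le_less_trans nn_integral_mono)
  then have finite: "AE \<omega> in M. rate_grid_sup T \<theta> \<omega> \<noteq> \<infinity>"
    using borel_measurable_rate_grid_sup by (intro nn_integral_PInf_AE) auto
  have "(\<integral>\<^sup>+\<omega>. ennreal (norm (enn2real (rate_grid_sup T \<theta> \<omega>))) \<partial>M) \<le> (\<integral>\<^sup>+\<omega>. rate_grid_sup T \<theta> \<omega> \<partial>M)"
    by (intro nn_integral_mono) (simp add: ennreal_enn2real_if)
  then have "integrable M (\<lambda>\<omega>. enn2real (rate_grid_sup T \<theta> \<omega>))"
    using finite_integral borel_measurable_rate_grid_sup by (intro integrableI_bounded) auto
  then show "integrable M (\<lambda>\<omega>. T * (enn2real (rate_grid_sup T \<theta> \<omega>) + 1))"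
    by simp
  show "AE \<omega> in M. \<bar>real (Ncount T \<theta> n \<omega>) / real n\<bar> \<le> T * (enn2real (rate_grid_sup T \<theta> \<omega>) + 1)"
    using finite AE_space
  proof eventually_elim
    case (elim \<omega>)
    show ?case
      using tau_path.Ncount_div_le_rate_grid_sup[OF tau_path_space[OF elim(2)] elim(1)] .
  qed
qed

lemma AE_Ncount_div_tendsto_integral:
  assumes "AE \<omega> in M. riemann_integrable_on (\<lambda>t. \<theta> t \<omega>) 0 T"
    and "AE \<omega> in M. 0 < (INF t\<in>{0..T}. \<theta> t \<omega>)"
  shows "AE \<omega> in M. (\<lambda>n. real (Ncount T \<theta> n \<omega>) / real n) \<longlonglongrightarrow> integral {0..T} (\<lambda>t. \<theta> t \<omega>)"
  using assms AE_space by eventually_elim (use tau_path.Ncount_div_tendsto_integral[OF tau_path_space] in blast)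

lemma AE_integral_path:
  assumes "AE \<omega> in M. riemann_integrable_on (\<lambda>t. \<theta> t \<omega>) 0 T"
  shows "AE \<omega> in M. integrable (restrict_space lborel {0..T}) (\<lambda>t. \<theta> t \<omega>) \<and>
      (\<integral>t. \<theta> t \<omega> \<partial>restrict_space lborel {0..T}) = integral {0..T} (\<lambda>t. \<theta> t \<omega>)"
  using assms AE_space
proof eventually_elim
  case (elim \<omega>)
  have "(\<lambda>t. \<theta> t \<omega>) \<in> borel_measurable (restrict_space lborel {0..T})"
    using measurable_compose[OF measurable_Pair2'[OF elim(2)] rate_measurable] by simp
  then have "integrable (restrict_space lborel {0..T}) (\<lambda>t. \<theta> t \<omega>)"
    using elim(1) by (rule riemann_integrable_on_integrable)
  then show ?case
    by (simp add: lebesgue_integral_restrict_lborel_eq_integral)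
qed

lemma borel_measurable_integral_path:
  "(\<lambda>\<omega>. \<integral>t. \<theta> t \<omega> \<partial>restrict_space lborel {0..T}) \<in> borel_measurable M"
proof -
  interpret finite_measure "restrict_space lborel {0..T}"
    by (rule finite_measure_restrict_lborel_Icc)
  have "(\<lambda>(\<omega>, t). \<theta> t \<omega>) \<in> borel_measurable (M \<Otimes>\<^sub>M restrict_space lborel {0..T})"
    using rate_measurable by (subst measurable_pair_swap_iff) simp
  then show ?thesis
    by (rule borel_measurable_lebesgue_integral[of "\<lambda>\<omega> t. \<theta> t \<omega>", simplified])
qed

lemma expectation_Ncount_div_tendsto:
  assumes "finite_measure M"
    and riemann: "AE \<omega> in M. riemann_integrable_on (\<lambda>t. \<theta> t \<omega>) 0 T"
    and inf_pos: "AE \<omega> in M. 0 < (INF t\<in>{0..T}. \<theta> t \<omega>)"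
    and sup_integrable: "(\<integral>\<^sup>+\<omega>. (SUP t\<in>{0..T}. ennreal (\<theta> t \<omega>)) \<partial>M) < \<infinity>"
  shows "(\<lambda>n. \<integral>\<omega>. real (Ncount T \<theta> n \<omega>) / real n \<partial>M) \<longlonglongrightarrow> integral {0..T} (\<lambda>t. \<integral>\<omega>. \<theta> t \<omega> \<partial>M)"
proof -
  interpret finite_measure M
    by (rule assms(1))
  let ?R = "restrict_space lborel {0..T}"
  define L where "L \<omega> = (\<integral>t. \<theta> t \<omega> \<partial>?R)" for \<omega>
  have lim: "AE \<omega> in M. (\<lambda>n. real (Ncount T \<theta> n \<omega>) / real n) \<longlonglongrightarrow> L \<omega>"
    using AE_Ncount_div_tendsto_integral[OF riemann inf_pos] AE_integral_path[OF riemann]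
    unfolding L_def by eventually_elim simp
  have Ncount_measurable: "(\<lambda>\<omega>. real (Ncount T \<theta> n \<omega>) / real n) \<in> borel_measurable M" for n
    using measurable_Ncount by simp
  note dominated = Ncount_div_dominated[OF assms(1) sup_integrable]
  have bound: "AE \<omega> in M. norm (real (Ncount T \<theta> n \<omega>) / real n) \<le> T * (enn2real (rate_grid_sup T \<theta> \<omega>) + 1)" for n
    using dominated(2) by simp
  note dominated_convergence =
    borel_measurable_integral_path[folded L_def] Ncount_measurable dominated(1) lim bound
  have "(\<lambda>n. \<integral>\<omega>. real (Ncount T \<theta> n \<omega>) / real n \<partial>M) \<longlonglongrightarrow> (\<integral>\<omega>. L \<omega> \<partial>M)"
    by (rule integral_dominated_convergence[OF dominated_convergence])
  moreover have "(\<integral>\<omega>. L \<omega> \<partial>M) = integral {0..T} (\<lambda>t. \<integral>\<omega>. \<theta> t \<omega> \<partial>M)"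
    unfolding L_def
  proof (rule Fubini_integral_interval[OF sigma_finite_measure rate_measurable])
    have "(\<integral>t. \<bar>\<theta> t \<omega>\<bar> \<partial>?R) = L \<omega>" if "\<omega> \<in> space M" for \<omega>
      unfolding L_def using that rate_pos
      by (auto intro!: Bochner_Integration.integral_cong simp: space_restrict_space less_imp_le)
    moreover have "integrable M L"
      by (rule integrable_dominated_convergence[OF dominated_convergence])
    ultimately show "integrable M (\<lambda>\<omega>. \<integral>t. \<bar>\<theta> t \<omega>\<bar> \<partial>?R)"
      by (subst Bochner_Integration.integrable_cong[OF refl]) auto
    show "AE \<omega> in M. integrable ?R (\<lambda>t. \<theta> t \<omega>)"
      using AE_integral_path[OF riemann] by eventually_elim simp
  qed
  ultimately show ?thesis
    by simp
qed

end

theorem proposition4p1: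
  fixes M :: "'a measure" and F :: "real \<Rightarrow> 'a measure"
    and \<theta> :: "real \<Rightarrow> 'a \<Rightarrow> real" and T :: real
  assumes "prob_space M"
    and "filtration (space M) F" and "\<And>t. sets (F t) \<subseteq> sets M"
    and "T > 0"
    and "adapted_on T F \<theta>"
    and "(\<lambda>(t, \<omega>). \<theta> t \<omega>) \<in> borel_measurable (restrict_space lborel {0..T} \<Otimes>\<^sub>M M)"
    and "\<And>t \<omega>. t \<in> {0..T} \<Longrightarrow> \<omega> \<in> space M \<Longrightarrow> \<theta> t \<omega> > 0"
    and "AE \<omega> in M. riemann_integrable_on (\<lambda>t. \<theta> t \<omega>) 0 T"
    and "AE \<omega> in M. (INF t\<in>{0..T}. \<theta> t \<omega>) > 0"
  shows "(AE \<omega> in M. (\<lambda>n. real (Ncount T \<theta> n \<omega>) / real n)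
            \<longlonglongrightarrow> integral {0..T} (\<lambda>t. \<theta> t \<omega>)) \<and>
         ((\<integral>\<^sup>+\<omega>. (SUP t\<in>{0..T}. ennreal (\<theta> t \<omega>)) \<partial>M) < \<infinity> \<longrightarrow>
         (\<lambda>n. \<integral>\<omega>. real (Ncount T \<theta> n \<omega>) / real n \<partial>M)
            \<longlonglongrightarrow> integral {0..T} (\<lambda>t. \<integral>\<omega>. \<theta> t \<omega> \<partial>M))"
  using AE_Ncount_div_tendsto_integral[OF assms(4,6,7,8,9)]
    expectation_Ncount_div_tendsto[OF assms(4,6,7) prob_space.finite_measure[OF assms(1)] assms(8,9)]
  by blast

end
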